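(* Let $n\ge 1$ and $\ln\hat q=[F_n(z_n)]^{-1}\ln z_n$. Then $$\vartheta(n)=\sum_{p\le n,\ p\text{ prime}}\ln p = 1_n^T\ln\hat q=\sum_{i=1}^n(\ln\hat q)_i.$$
   Context: $z_n=(1,\dots,n)^T$; logarithms of vectors are entry-wise; $1_n$ is the all-ones vector. For $1\le i\le n$, $e_{\bar i|n}\in\mathbb{R}^n$ has $k$-th entry $1$ if $i\mid k$, else $0$. For $2\le i\le n$, $f_{i|n}=\sum_{t=1}^{\lfloor \log_i n\rfloor} e_{\overline{i^t}|n}$, and $f_{1|n}=1_n$. $F_n(z_n)=[f_{1|n}\ \cdots\ f_{n|n}]\in\mathbb{R}^{n\times n}$, which is invertible. *)

theory Defs
  imports "HOL-Analysis.Analysis" "HOL-Computational_Algebra.Primes"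
begin

text \<open>Vectors in R^n are functions nat => real indexed by 1..n; the n x n matrix F_n(z_n)
  is the function (k,i) |-> k-th entry of column f_{i|n}, for 1 <= k,i <= n.\<close>

definition e_bar :: "nat \<Rightarrow> nat \<Rightarrow> real" where
  "e_bar i k = (if i dvd k then 1 else 0)"

definition f_vec :: "nat \<Rightarrow> nat \<Rightarrow> nat \<Rightarrow> real" where
  "f_vec n i k = (if i = 1 then 1
     else (\<Sum>t = 1..nat \<lfloor>log (real i) (real n)\<rfloor>. e_bar (i ^ t) k))"

definition F_mat :: "nat \<Rightarrow> nat \<Rightarrow> nat \<Rightarrow> real" where
  "F_mat n k i = f_vec n i k"

definition cheb_theta :: "nat \<Rightarrow> real" where
  "cheb_theta n = (\<Sum>p | prime p \<and> p \<le> n. ln (real p))"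

end

theory Submission
  imports Defs
begin

text \<open>Column \<open>p\<close> of \<open>F\<^sub>n(z\<^sub>n)\<close> counts the prime powers \<open>p\<^sup>t \<le> n\<close> dividing \<open>k\<close>, i.e. it is
  the vector of multiplicities of \<open>p\<close>; so by unique factorisation the vector that is \<open>ln p\<close> at
  primes \<open>p \<le> n\<close> and \<open>0\<close> elsewhere solves \<open>F\<^sub>n(z\<^sub>n) x = ln z\<^sub>n\<close>, and its entries add up to
  \<open>\<vartheta>(n)\<close>. As \<open>F\<^sub>n(z\<^sub>n)\<close> is lower triangular with unit diagonal, this solution is the only one.\<close>

definition F_solution :: "nat \<Rightarrow> (nat \<Rightarrow> real) \<Rightarrow> bool" where
  "F_solution n q \<longleftrightarrow> (\<forall>i. i \<notin> {1..n} \<longrightarrow> q i = 0) \<and>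
     (\<forall>k\<in>{1..n}. (\<Sum>i = 1..n. F_mat n k i * q i) = ln (real k))"

definition prime_ln :: "nat \<Rightarrow> nat \<Rightarrow> real" where
  "prime_ln n i = (if prime i \<and> i \<le> n then ln (real i) else 0)"

lemma F_mat_upper_eq_0:
  assumes "1 \<le> k" "k < i"
  shows "F_mat n k i = 0"
proof -
  have "e_bar (i ^ t) k = 0" if "t \<ge> 1" for t
  proof -
    have "k < i ^ t" using assms that self_le_power[of i t] by simp
    hence "\<not> i ^ t dvd k" using assms by (auto dest: dvd_imp_le)
    thus ?thesis by (simp add: e_bar_def)
  qed
  thus ?thesis using assms by (simp add: F_mat_def f_vec_def)
qed

lemma F_mat_diag_eq_1:
  assumes "1 \<le> k" "k \<le> n"
  shows "F_mat n k k = 1"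
proof (cases "k = 1")
  case True
  thus ?thesis by (simp add: F_mat_def f_vec_def)
next
  case False
  hence k2: "k \<ge> 2" using assms by simp
  define L where "L = nat \<lfloor>log (real k) (real n)\<rfloor>"
  have "real 1 \<le> log (real k) (real n)"
    by (rule le_log_of_power) (use k2 assms in auto)
  hence "L \<ge> 1" unfolding L_def by linarith
  hence "{1..L} = insert 1 {2..L}" by auto
  moreover have "e_bar (k ^ t) k = 0" if "t \<ge> 2" for t
  proof -
    have "k < k ^ 2" using k2 by (simp add: power2_eq_square)
    also have "\<dots> \<le> k ^ t" using that k2 by (intro power_increasing) auto
    finally have "\<not> k ^ t dvd k" using k2 by (auto dest: dvd_imp_le)
    thus ?thesis by (simp add: e_bar_def)
  qed
  ultimately show ?thesis using False unfolding F_mat_def f_vec_def L_def[symmetric]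
    by (simp add: e_bar_def)
qed

lemma F_mat_prime_column:
  assumes "prime p" "p \<le> n" "1 \<le> k" "k \<le> n"
  shows "F_mat n k p = real (multiplicity p k)"
proof -
  define L where "L = nat \<lfloor>log (real p) (real n)\<rfloor>"
  define m where "m = multiplicity p k"
  have p2: "p \<ge> 2" using assms prime_ge_2_nat by blast
  have "p ^ m \<le> k" unfolding m_def using assms by (intro dvd_imp_le multiplicity_dvd) auto
  hence "real m \<le> log (real p) (real n)"
    by (intro le_log_of_power) (use p2 assms in auto)
  hence "m \<le> L" unfolding L_def by linarith
  have e_bar_prime_power: "e_bar (p ^ t) k = (if t \<le> m then 1 else 0)" for t
    unfolding e_bar_def m_def using assms power_dvd_iff_le_multiplicity[of k p t]
    by (simp add: prime_nat_iff)
  have "F_mat n k p = (\<Sum>t\<in>{1..L}. if t \<le> m then 1 else 0)"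
    using p2 unfolding F_mat_def f_vec_def L_def[symmetric] e_bar_prime_power by simp
  also have "\<dots> = (\<Sum>t\<in>{1..m}. (1::real))"
    by (rule sum.mono_neutral_cong_right) (use \<open>m \<le> L\<close> in auto)
  finally show ?thesis by (simp add: m_def)
qed

lemma ln_eq_sum_multiplicity:
  assumes "1 \<le> k" "k \<le> n"
  shows "ln (real k) = (\<Sum>p | prime p \<and> p \<le> n. real (multiplicity p k) * ln (real p))"
proof -
  have "ln (real k) = ln (\<Prod>p\<in>prime_factors k. real p ^ multiplicity p k)"
    using prime_factorization_nat[of k] assms by (simp flip: of_nat_power of_nat_prod)
  also have "\<dots> = (\<Sum>p\<in>prime_factors k. real (multiplicity p k) * ln (real p))"
    by (subst ln_prod) (auto intro!: sum.cong simp: ln_realpow in_prime_factors_iff prime_gt_0_nat)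
  also have "\<dots> = (\<Sum>p | prime p \<and> p \<le> n. real (multiplicity p k) * ln (real p))"
    using assms by (intro sum.mono_neutral_left)
      (auto simp: in_prime_factors_iff not_dvd_imp_multiplicity_0 dest!: dvd_imp_le)
  finally show ?thesis .
qed

lemma lower_triangular_kernel_trivial:
  fixes A :: "nat \<Rightarrow> nat \<Rightarrow> 'a :: idom"
  assumes upper: "\<And>k i. k \<in> {1..n} \<Longrightarrow> i \<in> {1..n} \<Longrightarrow> k < i \<Longrightarrow> A k i = 0"
    and diag: "\<And>k. k \<in> {1..n} \<Longrightarrow> A k k \<noteq> 0"
    and kernel: "\<And>k. k \<in> {1..n} \<Longrightarrow> (\<Sum>i = 1..n. A k i * d i) = 0"
  shows "k \<in> {1..n} \<Longrightarrow> d k = 0"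
proof (induction k rule: less_induct)
  case (less k)
  have "(\<Sum>i\<in>{1..n} - {k}. A k i * d i) = 0"
  proof (intro sum.neutral ballI)
    fix i assume "i \<in> {1..n} - {k}"
    thus "A k i * d i = 0"
      using less upper[OF less.prems, of i] by (cases "i < k") auto
  qed
  hence "A k k * d k = 0"
    using kernel[OF less.prems] less.prems by (simp add: sum.remove)
  thus ?case using diag[OF less.prems] by simp
qed

lemma F_solution_prime_ln: "F_solution n (prime_ln n)"
  unfolding F_solution_def
proof (intro conjI allI impI ballI)
  fix i assume "i \<notin> {1..n}"
  thus "prime_ln n i = 0" using prime_gt_0_nat[of i] by (auto simp: prime_ln_def)
next
  fix k assume k: "k \<in> {1..n}"
  have "(\<Sum>i = 1..n. F_mat n k i * prime_ln n i) =
        (\<Sum>p | prime p \<and> p \<le> n. F_mat n k p * ln (real p))"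
    using prime_ge_1_nat
    by (intro sum.mono_neutral_cong_right) (auto simp: prime_ln_def)
  also have "\<dots> = (\<Sum>p | prime p \<and> p \<le> n. real (multiplicity p k) * ln (real p))"
    using k by (intro sum.cong) (auto simp: F_mat_prime_column)
  also have "\<dots> = ln (real k)" using k ln_eq_sum_multiplicity[of k n] by simp
  finally show "(\<Sum>i = 1..n. F_mat n k i * prime_ln n i) = ln (real k)" .
qed

lemma F_solution_unique:
  assumes "F_solution n q" "F_solution n q'"
  shows "q = q'"
proof
  fix i
  show "q i = q' i"
  proof (cases "i \<in> {1..n}")
    case True
    have "q i - q' i = 0"
    proof (rule lower_triangular_kernel_trivial[where A = "F_mat n", OF _ _ _ True])
      show "\<And>k. k \<in> {1..n} \<Longrightarrow> (\<Sum>i = 1..n. F_mat n k i * (q i - q' i)) = 0"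
        using assms by (simp add: F_solution_def right_diff_distrib sum_subtractf)
    qed (auto simp: F_mat_upper_eq_0 F_mat_diag_eq_1)
    thus ?thesis by simp
  next
    case False
    thus ?thesis using assms by (simp add: F_solution_def)
  qed
qed

lemma cheb_theta_eq_sum_prime_ln: "cheb_theta n = (\<Sum>i = 1..n. prime_ln n i)"
  unfolding cheb_theta_def prime_ln_def using prime_ge_1_nat
  by (intro sum.mono_neutral_cong_left) auto

theorem mainTheorem9:
  fixes n :: nat
  assumes "n \<ge> 1"
  shows "(\<exists>!q :: nat \<Rightarrow> real. (\<forall>i. i \<notin> {1..n} \<longrightarrow> q i = 0) \<and>
            (\<forall>k\<in>{1..n}. (\<Sum>i = 1..n. F_mat n k i * q i) = ln (real k)))
       \<and> (\<forall>q :: nat \<Rightarrow> real. (\<forall>i. i \<notin> {1..n} \<longrightarrow> q i = 0) \<and>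
            (\<forall>k\<in>{1..n}. (\<Sum>i = 1..n. F_mat n k i * q i) = ln (real k))
            \<longrightarrow> cheb_theta n = (\<Sum>i = 1..n. q i))"
proof -
  have "\<exists>!q. F_solution n q"
    using F_solution_prime_ln F_solution_unique by blast
  moreover have "\<forall>q. F_solution n q \<longrightarrow> cheb_theta n = (\<Sum>i = 1..n. q i)"
    using F_solution_prime_ln F_solution_unique cheb_theta_eq_sum_prime_ln by blast
  ultimately show ?thesis unfolding F_solution_def by blast
qed

end
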